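(* Let $F$ be a Banach lattice and $\tau$ a linear topology on $F$ weaker than the norm topology, with the Kadec-Pelczynski property. Then (i) $\tau$ agrees with the norm topology on every dispersed closed subspace of $F$; (ii) every DNS operator $T:F\to H$ into a Banach space complements $\tau$.
   Context: $\mathrm{S}_F$ is the unit sphere. A sequence $(e_n)\subset\mathrm{S}_F$ is almost disjoint if there is a disjoint $(f_n)\subset F$ ($|f_n|\wedge|f_m|=0$, $n\ne m$) with $\|e_n-f_n\|\to0$; a closed subspace is dispersed if it contains no almost disjoint sequence. $\tau$ has the Kadec-Pelczynski property if whenever $(f_p)_{p\in P}\subset\mathrm{S}_F$ is a $\tau$-null net and $(q_n)_{n\in\mathbb{N}}\subset P$, there are $p_n\ge q_n$ in $P$ with $(f_{p_n})_n$ almost disjoint. $T$ is DNS if no disjoint $(f_n)\subset\mathrm{S}_F$ has $\|Tf_n\|\to0$. $T$ complements $\tau$ if there is no net in $\mathrm{S}_F$ which is $\tau$-null and along which $\|Tf_p\|\to0$. *)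

theory Defs
  imports "HOL-Analysis.Analysis"
begin

definition lmod :: "'a::{lattice, ab_group_add} \<Rightarrow> 'a" where
  "lmod x = sup x (- x)"

definition disjoint_seq :: "(nat \<Rightarrow> 'a::{lattice, ab_group_add}) \<Rightarrow> bool" where
  "disjoint_seq f \<longleftrightarrow> (\<forall>n m. n \<noteq> m \<longrightarrow> inf (lmod (f n)) (lmod (f m)) = 0)"

definition almost_disjoint :: "(nat \<Rightarrow> 'a::{lattice, real_normed_vector}) \<Rightarrow> bool" where
  "almost_disjoint e \<longleftrightarrow> (\<forall>n. e n \<in> sphere 0 1) \<and>
     (\<exists>f. disjoint_seq f \<and> (\<lambda>n. norm (e n - f n)) \<longlonglongrightarrow> 0)"

definition dispersed :: "'a::{lattice, real_normed_vector} set \<Rightarrow> bool" where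
  "dispersed E \<longleftrightarrow> \<not> (\<exists>e. (\<forall>n. e n \<in> E) \<and> almost_disjoint e)"

definition linear_topology :: "'a::real_vector topology \<Rightarrow> bool" where
  "linear_topology \<tau> \<longleftrightarrow> topspace \<tau> = UNIV \<and>
     continuous_map (prod_topology \<tau> \<tau>) \<tau> (\<lambda>(x, y). x + y) \<and>
     continuous_map (prod_topology euclideanreal \<tau>) \<tau> (\<lambda>(c, x). c *\<^sub>R x)"

definition directed_on :: "'p set \<Rightarrow> ('p \<Rightarrow> 'p \<Rightarrow> bool) \<Rightarrow> bool" where
  "directed_on P le \<longleftrightarrow> P \<noteq> {} \<and> (\<forall>p\<in>P. le p p) \<and>
     (\<forall>p\<in>P. \<forall>q\<in>P. \<forall>r\<in>P. le p q \<and> le q r \<longrightarrow> le p r) \<and>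
     (\<forall>p\<in>P. \<forall>q\<in>P. \<exists>r\<in>P. le p r \<and> le q r)"

definition net_tendsto :: "'a topology \<Rightarrow> 'p set \<Rightarrow> ('p \<Rightarrow> 'p \<Rightarrow> bool) \<Rightarrow> ('p \<Rightarrow> 'a) \<Rightarrow> 'a \<Rightarrow> bool" where
  "net_tendsto \<tau> P le f x \<longleftrightarrow>
     (\<forall>U. openin \<tau> U \<and> x \<in> U \<longrightarrow> (\<exists>p0\<in>P. \<forall>p\<in>P. le p0 p \<longrightarrow> f p \<in> U))"

text \<open>Kadec-Pelczynski property, for nets whose directed set lives in the type 'p.\<close>
definition KP_property :: "'p itself \<Rightarrow> 'a::{lattice, real_normed_vector} topology \<Rightarrow> bool" where
  "KP_property _ \<tau> \<longleftrightarrow>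
     (\<forall>(P::'p set) le f. directed_on P le \<and> (\<forall>p\<in>P. f p \<in> sphere 0 1) \<and> net_tendsto \<tau> P le f 0 \<longrightarrow>
        (\<forall>q. (\<forall>n. q n \<in> P) \<longrightarrow>
           (\<exists>pn. (\<forall>n. pn n \<in> P \<and> le (q n) (pn n)) \<and> almost_disjoint (f \<circ> pn))))"

definition DNS :: "('a::{lattice, real_normed_vector} \<Rightarrow> 'b::real_normed_vector) \<Rightarrow> bool" where
  "DNS T \<longleftrightarrow> \<not> (\<exists>f. disjoint_seq f \<and> (\<forall>n. f n \<in> sphere 0 1) \<and> (\<lambda>n. norm (T (f n))) \<longlonglongrightarrow> 0)"

definition complements :: "'p itself \<Rightarrow> ('a::real_normed_vector \<Rightarrow> 'b::real_normed_vector) \<Rightarrow> 'a topology \<Rightarrow> bool" where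
  "complements _ T \<tau> \<longleftrightarrow>
     \<not> (\<exists>(P::'p set) le f. directed_on P le \<and> (\<forall>p\<in>P. f p \<in> sphere 0 1) \<and> net_tendsto \<tau> P le f 0 \<and>
          (\<forall>\<epsilon>>0. \<exists>p0\<in>P. \<forall>p\<in>P. le p0 p \<longrightarrow> norm (T (f p)) < \<epsilon>))"

end

theory Submission
  imports Defs
begin

text \<open>
  As \<tau> is coarser than the norm topology, (i) says that on a dispersed subspace E some
  \<tau>-neighbourhood of 0 is norm-small. Otherwise, choosing in every \<tau>-neighbourhood V of 0 a
  vector of E of norm at least \<epsilon> and normalising it gives a \<tau>-null net in the unit sphere
  of E, from which the Kadec-Pelczynski property extracts an almost disjoint sequence in E.

  For (ii), if T were small along a \<tau>-null net in the sphere, the Kadec-Pelczynski property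
  would give an almost disjoint sequence on which T tends to 0; the nearby disjoint sequence,
  normalised, then shows that T is not DNS.
\<close>

lemma scaleR_inf_pos:
  fixes a b :: "'a::{lattice, ordered_real_vector}"
  assumes c: "c > 0"
  shows "inf (c *\<^sub>R a) (c *\<^sub>R b) = c *\<^sub>R inf a b"
proof (rule antisym)
  show "c *\<^sub>R inf a b \<le> inf (c *\<^sub>R a) (c *\<^sub>R b)"
    using c by (simp add: scaleR_left_mono)
  have "inverse c *\<^sub>R inf (c *\<^sub>R a) (c *\<^sub>R b) \<le> inverse c *\<^sub>R (c *\<^sub>R a)"
    and "inverse c *\<^sub>R inf (c *\<^sub>R a) (c *\<^sub>R b) \<le> inverse c *\<^sub>R (c *\<^sub>R b)"
    using c by (intro scaleR_left_mono; simp)+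
  then have "inverse c *\<^sub>R inf (c *\<^sub>R a) (c *\<^sub>R b) \<le> inf a b"
    using c by simp
  then have "c *\<^sub>R (inverse c *\<^sub>R inf (c *\<^sub>R a) (c *\<^sub>R b)) \<le> c *\<^sub>R inf a b"
    using c by (intro scaleR_left_mono) auto
  then show "inf (c *\<^sub>R a) (c *\<^sub>R b) \<le> c *\<^sub>R inf a b" using c by simp
qed

lemma scaleR_sup_pos:
  fixes a b :: "'a::{lattice, ordered_real_vector}"
  assumes c: "c > 0"
  shows "sup (c *\<^sub>R a) (c *\<^sub>R b) = c *\<^sub>R sup a b"
proof (rule antisym)
  show "sup (c *\<^sub>R a) (c *\<^sub>R b) \<le> c *\<^sub>R sup a b"
    using c by (simp add: scaleR_left_mono)
  have "inverse c *\<^sub>R (c *\<^sub>R a) \<le> inverse c *\<^sub>R sup (c *\<^sub>R a) (c *\<^sub>R b)"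
    and "inverse c *\<^sub>R (c *\<^sub>R b) \<le> inverse c *\<^sub>R sup (c *\<^sub>R a) (c *\<^sub>R b)"
    using c by (intro scaleR_left_mono; simp)+
  then have "sup a b \<le> inverse c *\<^sub>R sup (c *\<^sub>R a) (c *\<^sub>R b)"
    using c by simp
  then have "c *\<^sub>R sup a b \<le> c *\<^sub>R (inverse c *\<^sub>R sup (c *\<^sub>R a) (c *\<^sub>R b))"
    using c by (intro scaleR_left_mono) auto
  then show "c *\<^sub>R sup a b \<le> sup (c *\<^sub>R a) (c *\<^sub>R b)" using c by simp
qed

lemma lmod_scaleR_pos:
  fixes a :: "'a::{lattice, ordered_real_vector}"
  assumes "c > 0"
  shows "lmod (c *\<^sub>R a) = c *\<^sub>R lmod a"
  unfolding lmod_def using scaleR_sup_pos[OF assms, of a "- a"] by simp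

lemma lmod_nonneg:
  fixes x :: "'a::{lattice, ordered_real_vector}"
  shows "0 \<le> lmod x"
proof -
  have "x + - x \<le> lmod x + lmod x" unfolding lmod_def
    by (intro add_mono) auto
  then have "(1/2::real) *\<^sub>R 0 \<le> (1/2::real) *\<^sub>R (lmod x + lmod x)"
    by (intro scaleR_left_mono) auto
  then show ?thesis by (simp add: scaleR_add_right[symmetric] del: scaleR_add_right)
qed

lemma disjoint_scaleR_pos:
  fixes a b :: "'a::{lattice, ordered_real_vector}"
  assumes "inf (lmod a) (lmod b) = 0" "c > 0" "d > 0"
  shows "inf (lmod (c *\<^sub>R a)) (lmod (d *\<^sub>R b)) = 0"
proof (rule antisym)
  define M where "M = max c d"
  have M: "M > 0" "c \<le> M" "d \<le> M" using assms by (auto simp: M_def)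
  have "inf (lmod (c *\<^sub>R a)) (lmod (d *\<^sub>R b)) = inf (c *\<^sub>R lmod a) (d *\<^sub>R lmod b)"
    using assms by (simp add: lmod_scaleR_pos)
  also have "\<dots> \<le> inf (M *\<^sub>R lmod a) (M *\<^sub>R lmod b)"
    using M lmod_nonneg by (intro inf_mono scaleR_right_mono) auto
  also have "\<dots> = 0" by (simp only: scaleR_inf_pos[OF M(1)] assms(1) scaleR_zero_right)
  finally show "inf (lmod (c *\<^sub>R a)) (lmod (d *\<^sub>R b)) \<le> 0" .
  show "0 \<le> inf (lmod (c *\<^sub>R a)) (lmod (d *\<^sub>R b))"
    using lmod_nonneg by (metis le_infI)
qed

lemma disjoint_seq_scaleR_pos:
  fixes g :: "nat \<Rightarrow> 'a::{lattice, ordered_real_vector}"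
  assumes "disjoint_seq g" "\<And>n. c n > 0"
  shows "disjoint_seq (\<lambda>n. c n *\<^sub>R g n)"
  using assms disjoint_scaleR_pos unfolding disjoint_seq_def by blast

lemma disjoint_seq_shift:
  "disjoint_seq g \<Longrightarrow> disjoint_seq (\<lambda>n. g (n + N))"
  unfolding disjoint_seq_def by simp

lemma almost_disjoint_approx_disjoint_sphere:
  fixes e :: "nat \<Rightarrow> 'a::{real_normed_vector, lattice, ordered_real_vector}"
  assumes "almost_disjoint e"
  obtains N h where "disjoint_seq h" "\<And>n. h n \<in> sphere 0 1"
    "(\<lambda>n. norm (e (n + N) - h n)) \<longlonglongrightarrow> 0"
proof -
  obtain g where dg: "disjoint_seq g" and eg: "(\<lambda>n. norm (e n - g n)) \<longlonglongrightarrow> 0"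
    and ne: "\<And>n. norm (e n) = 1"
    using assms unfolding almost_disjoint_def by auto
  have "\<forall>\<^sub>F n in sequentially. norm (norm (g n) - 1) \<le> norm (e n - g n)"
    using ne norm_triangle_ineq3[of "g _" "e _"] by (auto simp: norm_minus_commute)
  then have g1: "(\<lambda>n. norm (g n) - 1) \<longlonglongrightarrow> 0"
    using eg by (rule Lim_null_comparison)
  then obtain N where N: "\<And>n. n \<ge> N \<Longrightarrow> norm (g n) > 0"
    using order_tendstoD(1)[OF LIM_zero_cancel[OF g1], of 0] by (auto simp: eventually_sequentially)
  define h where "h n = (1 / norm (g (n + N))) *\<^sub>R g (n + N)" for n
  have gpos: "norm (g (n + N)) > 0" for n using N by simp
  have bound: "norm (e (n + N) - h n) \<le> norm (e (n + N) - g (n + N)) + \<bar>norm (g (n + N)) - 1\<bar>" for n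
  proof -
    have "norm (g (n + N) - h n) = norm ((1 - 1 / norm (g (n + N))) *\<^sub>R g (n + N))"
      by (simp add: h_def scaleR_diff_left)
    also have "\<dots> = \<bar>(1 - 1 / norm (g (n + N))) * norm (g (n + N))\<bar>"
      by (simp add: abs_mult)
    also have "\<dots> = \<bar>norm (g (n + N)) - 1\<bar>"
      using gpos[of n] by (simp add: left_diff_distrib)
    finally have "norm (g (n + N) - h n) = \<bar>norm (g (n + N)) - 1\<bar>" .
    then show ?thesis using norm_triangle_ineq[of "e (n + N) - g (n + N)" "g (n + N) - h n"] by simp
  qed
  have "(\<lambda>n. norm (e (n + N) - g (n + N)) + \<bar>norm (g (n + N)) - 1\<bar>) \<longlonglongrightarrow> 0"
    using tendsto_add[OF LIMSEQ_ignore_initial_segment[OF eg]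
        tendsto_rabs_zero[OF LIMSEQ_ignore_initial_segment[OF g1]]] by simp
  then have "(\<lambda>n. norm (e (n + N) - h n)) \<longlonglongrightarrow> 0"
    by (rule Lim_null_comparison[rotated]) (simp add: bound)
  moreover have "disjoint_seq h"
    unfolding h_def using gpos by (intro disjoint_seq_scaleR_pos[OF disjoint_seq_shift[OF dg]]) simp
  moreover have "h n \<in> sphere 0 1" for n using gpos[of n] by (simp add: h_def)
  ultimately show ?thesis using that by blast
qed

lemma DNS_not_null_on_almost_disjoint:
  fixes T :: "'a::{real_normed_vector, lattice, ordered_real_vector} \<Rightarrow> 'b::real_normed_vector"
  assumes T: "bounded_linear T" "DNS T" and e: "almost_disjoint e"
  shows "\<not> (\<lambda>n. norm (T (e n))) \<longlonglongrightarrow> 0"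
proof
  assume Te: "(\<lambda>n. norm (T (e n))) \<longlonglongrightarrow> 0"
  obtain N h where dh: "disjoint_seq h" and sh: "\<And>n. h n \<in> sphere 0 1"
    and eh: "(\<lambda>n. norm (e (n + N) - h n)) \<longlonglongrightarrow> 0"
    using almost_disjoint_approx_disjoint_sphere[OF e] by blast
  obtain K where K: "\<And>x. norm (T x) \<le> norm x * K"
    using bounded_linear.bounded[OF T(1)] by blast
  have bound: "norm (T (h n)) \<le> norm (T (e (n + N))) + K * norm (e (n + N) - h n)" for n
    using norm_triangle_ineq4[of "T (e (n + N))" "T (e (n + N) - h n)"] K[of "e (n + N) - h n"]
    by (simp add: linear_diff[OF bounded_linear.linear[OF T(1)]] mult.commute)
  have "(\<lambda>n. norm (T (e (n + N))) + K * norm (e (n + N) - h n)) \<longlonglongrightarrow> 0"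
    using tendsto_add[OF LIMSEQ_ignore_initial_segment[OF Te] tendsto_mult_right_zero[OF eh]] by simp
  then have "(\<lambda>n. norm (T (h n))) \<longlonglongrightarrow> 0"
    by (rule Lim_null_comparison[rotated]) (simp add: bound)
  then show False using T(2) dh sh unfolding DNS_def by blast
qed

lemma KP_property_imp_complements:
  fixes \<tau> :: "'a::{real_normed_vector, lattice, ordered_real_vector} topology"
  assumes KP: "KP_property TYPE('p) \<tau>" and T: "bounded_linear T" "DNS T"
  shows "complements TYPE('p) T \<tau>"
  unfolding complements_def
proof
  assume "\<exists>(P::'p set) le f. directed_on P le \<and> (\<forall>p\<in>P. f p \<in> sphere 0 1) \<and>
    net_tendsto \<tau> P le f 0 \<and> (\<forall>\<epsilon>>0. \<exists>p0\<in>P. \<forall>p\<in>P. le p0 p \<longrightarrow> norm (T (f p)) < \<epsilon>)"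
  then obtain P :: "'p set" and le f where net: "directed_on P le"
    "\<forall>p\<in>P. f p \<in> sphere 0 1" "net_tendsto \<tau> P le f 0"
    and small: "\<forall>\<epsilon>>0. \<exists>p0\<in>P. \<forall>p\<in>P. le p0 p \<longrightarrow> norm (T (f p)) < \<epsilon>"
    by blast
  have "\<forall>n. \<exists>p0. p0 \<in> P \<and> (\<forall>p\<in>P. le p0 p \<longrightarrow> norm (T (f p)) < 1 / Suc n)"
  proof
    fix n :: nat
    have "(1::real) / Suc n > 0" by simp
    then show "\<exists>p0. p0 \<in> P \<and> (\<forall>p\<in>P. le p0 p \<longrightarrow> norm (T (f p)) < 1 / Suc n)"
      using small by blast
  qed
  then obtain q where q: "\<forall>n. q n \<in> P \<and> (\<forall>p\<in>P. le (q n) p \<longrightarrow> norm (T (f p)) < 1 / Suc n)"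
    by (rule choice[THEN exE])
  obtain pn where pn: "\<forall>n. pn n \<in> P \<and> le (q n) (pn n)" and ad: "almost_disjoint (f \<circ> pn)"
    using KP[unfolded KP_property_def, rule_format, of P le f q] net q by blast
  have bound: "norm (T ((f \<circ> pn) n)) \<le> 1 / Suc n" for n
    using q pn by (simp add: less_imp_le)
  have "(\<lambda>n. 1 / real (Suc n)) \<longlonglongrightarrow> 0"
    using LIMSEQ_Suc[OF lim_const_over_n[of 1]] by simp
  then have "(\<lambda>n. norm (T ((f \<circ> pn) n))) \<longlonglongrightarrow> 0"
    by (rule Lim_null_comparison[rotated], intro always_eventually allI) (use bound in simp)
  then show False using DNS_not_null_on_almost_disjoint[OF T ad] by blast
qed

lemma linear_topology_openin_preimage_add:
  assumes "linear_topology \<tau>" "openin \<tau> V"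
  shows "openin \<tau> {y. y + a \<in> V}"
proof -
  have "continuous_map \<tau> (prod_topology \<tau> \<tau>) (\<lambda>y. (y, a))"
    using assms(1) by (intro continuous_map_pairedI) (auto simp: linear_topology_def)
  then have "continuous_map \<tau> \<tau> ((\<lambda>(x, y). x + y) \<circ> (\<lambda>y. (y, a)))"
    using assms(1) by (intro continuous_map_compose) (auto simp: linear_topology_def)
  from openin_continuous_map_preimage[OF this assms(2)] show ?thesis
    using assms(1) by (simp add: linear_topology_def)
qed

lemma linear_topology_openin_preimage_scaleR:
  assumes "linear_topology \<tau>" "openin \<tau> V"
  shows "openin \<tau> {y. c *\<^sub>R y \<in> V}"
proof -
  have "continuous_map \<tau> (prod_topology euclideanreal \<tau>) (\<lambda>y. (c, y))"
    using assms(1) by (intro continuous_map_pairedI) (auto simp: linear_topology_def)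
  then have "continuous_map \<tau> \<tau> ((\<lambda>(c, x). c *\<^sub>R x) \<circ> (\<lambda>y. (c, y)))"
    using assms(1) by (intro continuous_map_compose) (auto simp: linear_topology_def)
  from openin_continuous_map_preimage[OF this assms(2)] show ?thesis
    using assms(1) by (simp add: linear_topology_def)
qed

lemma linear_topology_scaleR_nbhd:
  assumes lin: "linear_topology \<tau>" and U: "openin \<tau> U" "0 \<in> U"
  obtains \<delta> W where "\<delta> > 0" "openin \<tau> W" "0 \<in> W"
    "\<And>c w. \<bar>c\<bar> < \<delta> \<Longrightarrow> w \<in> W \<Longrightarrow> c *\<^sub>R w \<in> U"
proof -
  have top: "topspace \<tau> = UNIV"
    and scale: "continuous_map (prod_topology euclideanreal \<tau>) \<tau> (\<lambda>(c, x). c *\<^sub>R x)"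
    using lin by (simp_all add: linear_topology_def)
  have "openin (prod_topology euclideanreal \<tau>)
      {p \<in> topspace (prod_topology euclideanreal \<tau>). (\<lambda>(c, x). c *\<^sub>R x) p \<in> U}"
    using scale U(1) by (rule openin_continuous_map_preimage)
  then have "openin (prod_topology euclideanreal \<tau>) {(c, x). c *\<^sub>R x \<in> U}"
    using top by (simp add: case_prod_unfold)
  then obtain A W where AW: "openin euclideanreal A" "openin \<tau> W" "0 \<in> A" "0 \<in> W"
      "A \<times> W \<subseteq> {(c, x). c *\<^sub>R x \<in> U}"
    using U(2) unfolding openin_prod_topology_alt by (auto dest!: spec[of _ 0])
  obtain \<delta> where \<delta>: "\<delta> > 0" "ball 0 \<delta> \<subseteq> A"
    using AW(1,3) open_contains_ball by (metis open_openin)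
  show ?thesis
  proof (rule that[OF \<delta>(1) AW(2,4)])
    fix c :: real and w assume "\<bar>c\<bar> < \<delta>" "w \<in> W"
    then have "(c, w) \<in> A \<times> W" using \<delta>(2) by auto
    then show "c *\<^sub>R w \<in> U" using AW(5) by auto
  qed
qed

lemma linear_topology_bounded_scaleR_nbhd:
  assumes lin: "linear_topology \<tau>" and U: "openin \<tau> U" "0 \<in> U" and M: "M \<ge> 0"
  obtains V where "openin \<tau> V" "0 \<in> V" "\<And>c v. \<bar>c\<bar> \<le> M \<Longrightarrow> v \<in> V \<Longrightarrow> c *\<^sub>R v \<in> U"
proof -
  obtain \<delta> W where W: "\<delta> > 0" "openin \<tau> W" "0 \<in> W"
    "\<And>c w. \<bar>c\<bar> < \<delta> \<Longrightarrow> w \<in> W \<Longrightarrow> c *\<^sub>R w \<in> U"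
    using linear_topology_scaleR_nbhd[OF lin U] by blast
  define k where "k = (M + 1) / \<delta>"
  have k: "k > 0" using W(1) M by (simp add: k_def)
  show ?thesis
  proof (rule that[of "{v. k *\<^sub>R v \<in> W}"])
    show "openin \<tau> {v. k *\<^sub>R v \<in> W}"
      using linear_topology_openin_preimage_scaleR[OF lin W(2)] .
    show "0 \<in> {v. k *\<^sub>R v \<in> W}" using W(3) by simp
    fix c v assume c: "\<bar>c\<bar> \<le> M" and v: "v \<in> {v. k *\<^sub>R v \<in> W}"
    have "\<bar>c / k\<bar> = \<bar>c\<bar> * \<delta> / (M + 1)" using W(1) M by (simp add: k_def abs_mult)
    also have "\<dots> < \<delta>"
    proof -
      have "\<bar>c\<bar> * \<delta> < (M + 1) * \<delta>" using c W(1) by (intro mult_strict_right_mono) auto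
      then show ?thesis using M by (simp add: divide_less_eq mult.commute)
    qed
    finally have "(c / k) *\<^sub>R (k *\<^sub>R v) \<in> U" using W(4) v by blast
    then show "c *\<^sub>R v \<in> U" using k by simp
  qed
qed

lemma directed_on_nbhds:
  assumes "x \<in> topspace \<tau>"
  shows "directed_on {V. openin \<tau> V \<and> x \<in> V} (\<lambda>V W. W \<subseteq> V)"
  unfolding directed_on_def
proof (intro conjI ballI impI)
  show "{V. openin \<tau> V \<and> x \<in> V} \<noteq> {}" using assms by blast
  fix p q assume "p \<in> {V. openin \<tau> V \<and> x \<in> V}" "q \<in> {V. openin \<tau> V \<and> x \<in> V}"
  then show "\<exists>r\<in>{V. openin \<tau> V \<and> x \<in> V}. r \<subseteq> p \<and> r \<subseteq> q"
    by (intro bexI[of _ "p \<inter> q"]) auto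
qed auto

lemma net_tendsto_nbhd_selection_scaleR:
  assumes lin: "linear_topology \<tau>" and z: "\<And>V. openin \<tau> V \<Longrightarrow> 0 \<in> V \<Longrightarrow> z V \<in> V"
    and c: "\<And>V. openin \<tau> V \<Longrightarrow> 0 \<in> V \<Longrightarrow> \<bar>c V\<bar> \<le> M" and M: "M \<ge> 0"
  shows "net_tendsto \<tau> {V. openin \<tau> V \<and> 0 \<in> V} (\<lambda>V W. W \<subseteq> V) (\<lambda>V. c V *\<^sub>R z V) 0"
  unfolding net_tendsto_def
proof (intro allI impI)
  fix U assume "openin \<tau> U \<and> 0 \<in> U"
  then obtain V where V: "openin \<tau> V" "0 \<in> V"
    "\<And>c v. \<bar>c\<bar> \<le> M \<Longrightarrow> v \<in> V \<Longrightarrow> c *\<^sub>R v \<in> U"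
    using linear_topology_bounded_scaleR_nbhd[OF lin _ _ M] by blast
  show "\<exists>V0\<in>{V. openin \<tau> V \<and> 0 \<in> V}. \<forall>W\<in>{V. openin \<tau> V \<and> 0 \<in> V}. W \<subseteq> V0 \<longrightarrow> c W *\<^sub>R z W \<in> U"
  proof (intro bexI ballI impI)
    fix W assume W: "W \<in> {V. openin \<tau> V \<and> 0 \<in> V}" "W \<subseteq> V"
    then have "z W \<in> V" using z by blast
    with W(1) show "c W *\<^sub>R z W \<in> U" using V(3) c by blast
  qed (use V in blast)
qed

lemma dispersed_nbhd_zero_norm_small:
  fixes \<tau> :: "'a::{real_normed_vector, lattice} topology"
  assumes lin: "linear_topology \<tau>" and KP: "KP_property TYPE('a set) \<tau>"
    and E: "subspace E" "dispersed E" and \<epsilon>: "\<epsilon> > 0"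
  shows "\<exists>V. openin \<tau> V \<and> 0 \<in> V \<and> V \<inter> E \<subseteq> ball 0 \<epsilon>"
proof (rule ccontr)
  define P where "P = {V. openin \<tau> V \<and> 0 \<in> V}"
  assume "\<not> ?thesis"
  then have "\<forall>V\<in>P. \<exists>z. z \<in> V \<and> z \<in> E \<and> \<epsilon> \<le> norm z"
    by (auto simp: P_def subset_iff not_less)
  then obtain z where z: "\<And>V. V \<in> P \<Longrightarrow> z V \<in> V \<and> z V \<in> E \<and> \<epsilon> \<le> norm (z V)"
    by (metis bchoice)
  define f where "f V = (1 / norm (z V)) *\<^sub>R z V" for V
  have zpos: "norm (z V) > 0" if "V \<in> P" for V
    using z[OF that] \<epsilon> by linarith
  have dir: "directed_on P (\<lambda>V W. W \<subseteq> V)"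
    unfolding P_def using lin by (intro directed_on_nbhds) (simp add: linear_topology_def)
  have bound: "\<bar>1 / norm (z V)\<bar> \<le> 1 / \<epsilon>" if "V \<in> P" for V
    using z[OF that] \<epsilon> by (simp add: frac_le)
  have nt: "net_tendsto \<tau> P (\<lambda>V W. W \<subseteq> V) f 0"
    unfolding P_def f_def
  proof (rule net_tendsto_nbhd_selection_scaleR[OF lin])
    show "z V \<in> V" "\<bar>1 / norm (z V)\<bar> \<le> 1 / \<epsilon>" if "openin \<tau> V" "0 \<in> V" for V
      using z bound that unfolding P_def by blast+
  qed (use \<epsilon> in simp)
  have sph: "\<forall>V\<in>P. f V \<in> sphere 0 1" using zpos by (simp add: f_def)
  have "UNIV \<in> P"
    using lin openin_topspace[of \<tau>] by (simp add: P_def linear_topology_def)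
  then obtain pn where pn: "\<forall>n. pn n \<in> P" and ad: "almost_disjoint (f \<circ> pn)"
    using KP[unfolded KP_property_def, rule_format, of P "\<lambda>V W. W \<subseteq> V" f "\<lambda>_. UNIV"] dir sph nt
    by blast
  have "(f \<circ> pn) n \<in> E" for n
    using z pn E(1) unfolding f_def by (simp add: subspace_scale)
  then show False using E(2) ad unfolding dispersed_def by blast
qed

lemma subtopology_eq_top_of_set_if_nbhds_norm_small:
  fixes \<tau> :: "'a::metric_space topology"
  assumes weaker: "\<And>U. openin \<tau> U \<Longrightarrow> open U"
    and small: "\<And>x \<epsilon>. x \<in> E \<Longrightarrow> \<epsilon> > 0 \<Longrightarrow> \<exists>U. openin \<tau> U \<and> x \<in> U \<and> U \<inter> E \<subseteq> ball x \<epsilon>"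
  shows "subtopology \<tau> E = top_of_set E"
  unfolding topology_eq
proof (intro allI iffI)
  fix S assume "openin (subtopology \<tau> E) S"
  then show "openin (top_of_set E) S" using weaker by (auto simp: openin_subtopology openin_open)
next
  fix S assume S: "openin (top_of_set E) S"
  define T where "T = \<Union>{U. openin \<tau> U \<and> U \<inter> E \<subseteq> S}"
  have "S \<subseteq> T"
  proof
    fix x assume x: "x \<in> S"
    obtain \<epsilon> where \<epsilon>: "\<epsilon> > 0" "\<And>y. y \<in> E \<Longrightarrow> dist y x < \<epsilon> \<Longrightarrow> y \<in> S"
      using S x unfolding openin_euclidean_subtopology_iff by blast
    obtain U where U: "openin \<tau> U" "x \<in> U" "U \<inter> E \<subseteq> ball x \<epsilon>"
      using small[OF _ \<epsilon>(1)] S x by (meson in_mono openin_imp_subset)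
    with \<epsilon>(2) have "U \<inter> E \<subseteq> S" by (auto simp: dist_commute)
    with U show "x \<in> T" unfolding T_def by blast
  qed
  moreover have "T \<inter> E \<subseteq> S" "S \<subseteq> E"
    using S by (auto simp: T_def openin_euclidean_subtopology_iff)
  ultimately have "S = T \<inter> E" by blast
  moreover have "openin \<tau> T" unfolding T_def by (rule openin_Union) auto
  ultimately show "openin (subtopology \<tau> E) S" by (auto simp: openin_subtopology)
qed

lemma KP_property_dispersed_subtopology_eq:
  fixes \<tau> :: "'a::{real_normed_vector, lattice} topology"
  assumes lin: "linear_topology \<tau>" and weaker: "\<And>U. openin \<tau> U \<Longrightarrow> open U"
    and KP: "KP_property TYPE('a set) \<tau>" and E: "subspace E" "dispersed E"
  shows "subtopology \<tau> E = top_of_set E"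
proof (rule subtopology_eq_top_of_set_if_nbhds_norm_small[OF weaker])
  fix x :: 'a and \<epsilon> :: real assume x: "x \<in> E" and "\<epsilon> > 0"
  then obtain V where V: "openin \<tau> V" "0 \<in> V" "V \<inter> E \<subseteq> ball 0 \<epsilon>"
    using dispersed_nbhd_zero_norm_small[OF lin KP E] by blast
  have "{y. y + - x \<in> V} \<inter> E \<subseteq> ball x \<epsilon>"
    using V(3) x E(1) by (auto simp: subspace_diff dist_norm norm_minus_commute)
  moreover have "x \<in> {y. y + - x \<in> V}" using V(2) by simp
  ultimately show "\<exists>U. openin \<tau> U \<and> x \<in> U \<and> U \<inter> E \<subseteq> ball x \<epsilon>"
    using linear_topology_openin_preimage_add[OF lin V(1)] by blast
qed

theorem mainTheorem12:
  fixes \<tau> :: "'a::{banach, lattice, ordered_real_vector} topology"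
  assumes banach_lattice: "\<And>x y::'a. lmod x \<le> lmod y \<Longrightarrow> norm x \<le> norm y"
    and lin: "linear_topology \<tau>"
    and weaker: "\<And>U. openin \<tau> U \<Longrightarrow> open U"
    and KP_sets: "KP_property TYPE('a set) \<tau>"
    and KP: "KP_property TYPE('p) \<tau>"
  shows "(\<forall>E::'a set. subspace E \<and> closed E \<and> dispersed E \<longrightarrow> subtopology \<tau> E = top_of_set E)
       \<and> (\<forall>T::'a \<Rightarrow> 'b::banach. bounded_linear T \<and> DNS T \<longrightarrow> complements TYPE('p) T \<tau>)"
  using KP_property_dispersed_subtopology_eq[OF lin weaker KP_sets]
    KP_property_imp_complements[OF KP] by blast

end
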